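(* Let $L$ be an $n\times n$ complex matrix with at most one nonzero entry in each row and in each column (a generalized permutation matrix in the relaxed sense, allowing zero rows and columns). Let $n_z = n - \mathrm{rank}(L)$ be the number of zero columns (equivalently, zero rows) of $L$. Consider decompositions $L = AD$ with $A$ an $n\times n$ permutation matrix and $D$ an $n\times n$ diagonal matrix. Then $D$ is always uniquely determined by $L$, and the decomposition $L=AD$ is unique if and only if $n_z \le 1$; otherwise there are $n_z!$ ways to choose $A$. However, if one imposes the rule that, for every cycle of the permutation $\sigma$ associated with $A$ (with domain $N_\gamma$), the set $\{j \in N_\gamma : D_j = 0\}$ has at most one element, then the choice of $A$ is unique; and it is always possible to choose $A$ so that this rule holds.
   Context: For a permutation matrix $A$, the associated permutation $\sigma\in S_n$ is defined by $A e_j = e_{\sigma(j)}$, so that $(AD)e_j = D_j e_{\sigma(j)}$ where $D_j$ is the $j$-th diagonal entry of $D$. The permutation $\sigma$ decomposes into disjoint cycles; $N_\gamma\subseteq\{1,\dots,n\}$ denotes the domain of the $\gamma$-th cycle, and these domains partition $\{1,\dots,n\}$. *)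

theory Defs
  imports "HOL-Analysis.Analysis"
begin

definition perm_mat_of :: "('n::finite \<Rightarrow> 'n) \<Rightarrow> complex^'n^'n" where
  "perm_mat_of \<sigma> = (\<chi> i j. if i = \<sigma> j then 1 else 0)"

definition is_perm_matrix :: "complex^'n^'n::finite \<Rightarrow> bool" where
  "is_perm_matrix A \<longleftrightarrow> (\<exists>\<sigma>. \<sigma> permutes (UNIV::'n set) \<and> A = perm_mat_of \<sigma>)"

definition is_diag_matrix :: "complex^'n^'n::finite \<Rightarrow> bool" where
  "is_diag_matrix D \<longleftrightarrow> (\<forall>i j. i \<noteq> j \<longrightarrow> D $ i $ j = 0)"

definition relaxed_gen_perm :: "complex^'n^'n::finite \<Rightarrow> bool" where
  "relaxed_gen_perm L \<longleftrightarrow>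
     (\<forall>i j k. L $ i $ j \<noteq> 0 \<and> L $ i $ k \<noteq> 0 \<longrightarrow> j = k) \<and>
     (\<forall>i j k. L $ i $ j \<noteq> 0 \<and> L $ k $ j \<noteq> 0 \<longrightarrow> i = k)"

definition is_AD_decomp :: "complex^'n^'n::finite \<Rightarrow> complex^'n^'n \<Rightarrow> complex^'n^'n \<Rightarrow> bool" where
  "is_AD_decomp L A D \<longleftrightarrow> is_perm_matrix A \<and> is_diag_matrix D \<and> L = A ** D"

definition cycle_dom :: "('n \<Rightarrow> 'n) \<Rightarrow> 'n \<Rightarrow> 'n set" where
  "cycle_dom \<sigma> j = {(\<sigma> ^^ k) j | k. True}"

definition cycle_rule :: "complex^'n^'n::finite \<Rightarrow> complex^'n^'n \<Rightarrow> bool" where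
  "cycle_rule A D \<longleftrightarrow> (\<forall>\<sigma>. \<sigma> permutes (UNIV::'n set) \<and> A = perm_mat_of \<sigma> \<longrightarrow>
      (\<forall>j. card {i \<in> cycle_dom \<sigma> j. D $ i $ i = 0} \<le> 1))"

end

theory Submission
  imports Defs "HOL-Combinatorics.Orbits" "HOL-Combinatorics.Cycles"
begin

(* L = P D with P the permutation matrix of \<sigma> and D diagonal holds exactly when L vanishes off
   the graph {(\<sigma> j, j)} of \<sigma> and D holds the column sums of L. So D is determined by L, and
   the admissible \<sigma> are the permutations agreeing with one of them outside the set Z of zero
   columns; there are |Z|! of them, and |Z| = n - rank L.

   Outside Z the values of \<sigma> are prescribed, and this partial injection splits into closed
   cycles and into paths, each starting at a point not in \<sigma>(-Z) and ending at a point of Z.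
   A cycle of \<sigma> contains at most one point of Z iff \<sigma> sends the end z of every path back to
   the start of the same path. This determines \<sigma> on Z, and defining \<sigma> this way always gives
   a permutation. *)

section \<open>Permutations with prescribed values outside a set\<close>

lemma card_Compl_finite: "card (- A) = CARD('a::finite) - card (A :: 'a set)"
  using card_Diff_subset[of A UNIV] by (simp add: Compl_eq_Diff_UNIV)

lemma inj_on_extends_to_permutation:
  fixes r :: "'a::finite \<Rightarrow> 'a"
  assumes "inj_on r J"
  obtains \<sigma> where "\<sigma> permutes UNIV" "\<And>j. j \<in> J \<Longrightarrow> \<sigma> j = r j"
proof -
  have "card (- J) = card (- r ` J)" using card_image[OF assms] by (simp add: card_Compl_finite)
  then obtain h where h: "bij_betw h (- J) (- r ` J)"
    using finite_same_card_bij[OF finite finite] by blast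
  define \<sigma> where "\<sigma> j = (if j \<in> J then r j else h j)" for j
  have "bij_betw \<sigma> J (r ` J)"
    using inj_on_imp_bij_betw[OF assms]
    by (rule bij_betw_cong[THEN iffD1, rotated]) (simp add: \<sigma>_def)
  moreover have "bij_betw \<sigma> (- J) (- r ` J)"
    using h by (rule bij_betw_cong[THEN iffD1, rotated]) (simp add: \<sigma>_def)
  ultimately have "bij_betw \<sigma> (J \<union> - J) (r ` J \<union> - r ` J)" by (rule bij_betw_combine) blast
  then have "\<sigma> permutes UNIV" by (intro bij_imp_permutes) simp_all
  with that show thesis by (simp add: \<sigma>_def)
qed

lemma card_perms_agreeing_outside:
  fixes \<sigma>\<^sub>0 :: "'a::finite \<Rightarrow> 'a"
  assumes "\<sigma>\<^sub>0 permutes UNIV"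
  shows "card {\<sigma>. \<sigma> permutes UNIV \<and> (\<forall>x. x \<notin> Z \<longrightarrow> \<sigma> x = \<sigma>\<^sub>0 x)} = fact (card Z)"
proof -
  have inv_cancel: "\<And>x. inv \<sigma>\<^sub>0 (\<sigma>\<^sub>0 x) = x" "\<And>x. \<sigma>\<^sub>0 (inv \<sigma>\<^sub>0 x) = x"
    using permutes_inverses[OF assms] by auto
  have "{\<sigma>. \<sigma> permutes UNIV \<and> (\<forall>x. x \<notin> Z \<longrightarrow> \<sigma> x = \<sigma>\<^sub>0 x)} = (\<circ>) \<sigma>\<^sub>0 ` {\<pi>. \<pi> permutes Z}"
  proof (intro equalityI subsetI)
    fix \<sigma> assume "\<sigma> \<in> {\<sigma>. \<sigma> permutes UNIV \<and> (\<forall>x. x \<notin> Z \<longrightarrow> \<sigma> x = \<sigma>\<^sub>0 x)}"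
    then have "\<sigma> permutes UNIV" and fixed: "\<And>x. x \<notin> Z \<Longrightarrow> \<sigma> x = \<sigma>\<^sub>0 x" by auto
    then have "inv \<sigma>\<^sub>0 \<circ> \<sigma> permutes UNIV" using assms by (simp add: permutes_compose permutes_inv)
    then have "inv \<sigma>\<^sub>0 \<circ> \<sigma> permutes Z" by (rule permutes_superset) (simp add: fixed inv_cancel)
    moreover have "\<sigma> = \<sigma>\<^sub>0 \<circ> (inv \<sigma>\<^sub>0 \<circ> \<sigma>)" by (simp add: fun_eq_iff inv_cancel)
    ultimately show "\<sigma> \<in> (\<circ>) \<sigma>\<^sub>0 ` {\<pi>. \<pi> permutes Z}" by blast
  next
    fix \<sigma> assume "\<sigma> \<in> (\<circ>) \<sigma>\<^sub>0 ` {\<pi>. \<pi> permutes Z}"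
    then obtain \<pi> where "\<pi> permutes Z" "\<sigma> = \<sigma>\<^sub>0 \<circ> \<pi>" by blast
    then show "\<sigma> \<in> {\<sigma>. \<sigma> permutes UNIV \<and> (\<forall>x. x \<notin> Z \<longrightarrow> \<sigma> x = \<sigma>\<^sub>0 x)}"
      using assms permutes_subset[of \<pi> Z UNIV] by (auto simp: permutes_compose permutes_not_in)
  qed
  moreover have "inj_on ((\<circ>) \<sigma>\<^sub>0) {\<pi>. \<pi> permutes Z}"
    using permutes_inj[OF assms] by (auto intro!: inj_onI simp: fun_eq_iff inj_eq)
  ultimately show ?thesis by (simp add: card_image card_permutations)
qed

definition orbit_segment :: "('a \<Rightarrow> 'a) \<Rightarrow> 'a set \<Rightarrow> 'a \<Rightarrow> 'a \<Rightarrow> nat \<Rightarrow> bool" where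
  "orbit_segment \<sigma> Z s z n \<longleftrightarrow> (\<sigma> ^^ n) s = z \<and> (\<forall>k<n. (\<sigma> ^^ k) s \<notin> Z)"

definition at_most_one_per_orbit :: "('a \<Rightarrow> 'a) \<Rightarrow> 'a set \<Rightarrow> bool" where
  "at_most_one_per_orbit \<sigma> Z \<longleftrightarrow> (\<forall>x\<in>Z. \<forall>y\<in>Z. y \<in> orbit \<sigma> x \<longrightarrow> y = x)"

lemma orbit_segment_cong:
  assumes "\<And>x. x \<notin> Z \<Longrightarrow> \<tau> x = \<sigma> x" and "orbit_segment \<sigma> Z s z n"
  shows "orbit_segment \<tau> Z s z n"
proof -
  have "(\<tau> ^^ k) s = (\<sigma> ^^ k) s" if "k \<le> n" for k
    using that
  proof (induction k)
    case (Suc k)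
    then have "(\<sigma> ^^ k) s \<notin> Z" using assms(2) by (simp add: orbit_segment_def)
    then show ?case using Suc assms(1) by simp
  qed simp
  then show ?thesis using assms(2) by (simp add: orbit_segment_def)
qed

lemma orbit_segment_end_unique:
  assumes "orbit_segment \<sigma> Z s x n" "orbit_segment \<sigma> Z s y m" "x \<in> Z" "y \<in> Z"
  shows "x = y"
  using assms unfolding orbit_segment_def by (metis linorder_neqE_nat)

lemma orbit_segment_start_unique:
  assumes "inj \<sigma>" "orbit_segment \<sigma> Z s z n" "orbit_segment \<sigma> Z t z m"
    "s \<notin> \<sigma> ` (- Z)" "t \<notin> \<sigma> ` (- Z)"
  shows "s = t"
proof -
  have "s = t" if seg: "orbit_segment \<sigma> Z s z n" "orbit_segment \<sigma> Z t z m"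
    and s: "s \<notin> \<sigma> ` (- Z)" and le: "n \<le> m" for s t n m
  proof -
    have "(\<sigma> ^^ n) ((\<sigma> ^^ (m - n)) t) = (\<sigma> ^^ n) s"
      using seg le unfolding orbit_segment_def
      by (metis funpow_add le_add_diff_inverse o_apply)
    then have t_to_s: "(\<sigma> ^^ (m - n)) t = s"
      using inj_fn[OF assms(1)] by (simp add: inj_eq)
    show "s = t"
    proof (cases "m - n")
      case (Suc q)
      then have "(\<sigma> ^^ q) t \<notin> Z" using seg(2) unfolding orbit_segment_def by simp
      moreover have "s = \<sigma> ((\<sigma> ^^ q) t)" using t_to_s Suc by simp
      ultimately show ?thesis using s by blast
    qed (use t_to_s in simp)
  qed
  then show ?thesis using assms(2-) by (metis nat_le_linear)
qed

lemma orbit_segment_start_exists: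
  assumes "permutation \<sigma>" "z \<in> Z"
  obtains s n where "orbit_segment \<sigma> Z s z n" "s \<notin> \<sigma> ` (- Z)"
proof -
  obtain N where N: "\<sigma> ^^ N = id" "N > 0" using permutation_is_nilpotent[OF assms(1)] by blast
  have inj: "inj \<sigma>" using assms(1) bij_is_inj permutation_bijective by blast
  \<comment> \<open>Walking backwards from z = (\<sigma> ^^ N) z, the first point without a preimage
    outside Z is (\<sigma> ^^ i) z for the largest such i \<le> N; i = 1 always qualifies.\<close>
  let ?fresh = "\<lambda>i. 1 \<le> i \<and> i \<le> N \<and> (\<sigma> ^^ i) z \<notin> \<sigma> ` (- Z)"
  have "?fresh 1" using N(2) assms(2) inj by (auto simp: inj_eq)
  then obtain i where i: "?fresh i" and last: "\<And>i'. ?fresh i' \<Longrightarrow> i' \<le> i"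
    using Nat.ex_has_greatest_nat[where P = ?fresh and k = 1 and b = N] by blast
  have "orbit_segment \<sigma> Z ((\<sigma> ^^ i) z) z (N - i)"
    unfolding orbit_segment_def
  proof (intro conjI allI impI)
    show "(\<sigma> ^^ (N - i)) ((\<sigma> ^^ i) z) = z"
      using i N(1) by (metis funpow_add id_apply le_add_diff_inverse2 o_apply)
  next
    fix k assume "k < N - i"
    then have "\<sigma> ((\<sigma> ^^ k) ((\<sigma> ^^ i) z)) \<in> \<sigma> ` (- Z)"
      using last[of "Suc (k + i)"] by (force simp: funpow_add)
    then show "(\<sigma> ^^ k) ((\<sigma> ^^ i) z) \<notin> Z" using inj by (auto simp: inj_eq)
  qed
  with i that show thesis by blast
qed

lemma at_most_one_per_orbit_iff_segments:
  assumes "permutation \<sigma>"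
  shows "at_most_one_per_orbit \<sigma> Z \<longleftrightarrow> (\<forall>z\<in>Z. \<exists>n. orbit_segment \<sigma> Z (\<sigma> z) z n)"
proof
  assume once: "at_most_one_per_orbit \<sigma> Z"
  show "\<forall>z\<in>Z. \<exists>n. orbit_segment \<sigma> Z (\<sigma> z) z n"
  proof
    fix z assume z: "z \<in> Z"
    define P where "P = least_power \<sigma> z"
    have P: "(\<sigma> ^^ P) z = z" "P > 0"
      using least_power_of_permutation[OF assms] by (simp_all add: P_def)
    have "orbit_segment \<sigma> Z (\<sigma> z) z (P - 1)"
      unfolding orbit_segment_def
    proof (intro conjI allI impI)
      show "(\<sigma> ^^ (P - 1)) (\<sigma> z) = z" using P by (metis Suc_diff_1 funpow_Suc_right o_apply)
    next
      fix k assume "k < P - 1"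
      then have "(\<sigma> ^^ Suc k) z \<noteq> z"
        using least_power_le[where f = \<sigma> and n = "Suc k" and x = z] by (force simp: P_def)
      moreover have "(\<sigma> ^^ Suc k) z \<in> orbit \<sigma> z" unfolding orbit_altdef by blast
      ultimately show "(\<sigma> ^^ k) (\<sigma> z) \<notin> Z"
        using once z unfolding at_most_one_per_orbit_def by (metis funpow_Suc_right o_apply)
    qed
    then show "\<exists>n. orbit_segment \<sigma> Z (\<sigma> z) z n" by blast
  qed
next
  assume segments: "\<forall>z\<in>Z. \<exists>n. orbit_segment \<sigma> Z (\<sigma> z) z n"
  show "at_most_one_per_orbit \<sigma> Z"
    unfolding at_most_one_per_orbit_def
  proof (intro ballI impI)
    fix x y assume "x \<in> Z" "y \<in> Z" "y \<in> orbit \<sigma> x"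
    then obtain n where n: "orbit_segment \<sigma> Z (\<sigma> x) x n" using segments by blast
    then have period: "(\<sigma> ^^ Suc n) x = x" by (simp add: orbit_segment_def funpow_swap1)
    obtain c where "y = (\<sigma> ^^ c) x" using \<open>y \<in> orbit \<sigma> x\<close> by (auto simp: orbit_altdef)
    then have y: "y = (\<sigma> ^^ (c mod Suc n)) x" by (simp add: funpow_mod_eq[OF period])
    show "y = x"
    proof (cases "c mod Suc n")
      case (Suc q)
      then have "q < n" using mod_less_divisor[of "Suc n" c] by simp
      then have "(\<sigma> ^^ q) (\<sigma> x) \<notin> Z" using n by (simp add: orbit_segment_def)
      then show ?thesis using y Suc \<open>y \<in> Z\<close> by (simp add: funpow_swap1)
    qed (use y in simp)
  qed
qed

lemma at_most_one_per_orbit_unique: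
  assumes "permutation \<sigma>\<^sub>1" "permutation \<sigma>\<^sub>2" "\<And>x. x \<notin> Z \<Longrightarrow> \<sigma>\<^sub>1 x = \<sigma>\<^sub>2 x"
    and "at_most_one_per_orbit \<sigma>\<^sub>1 Z" "at_most_one_per_orbit \<sigma>\<^sub>2 Z"
  shows "\<sigma>\<^sub>1 = \<sigma>\<^sub>2"
proof
  fix z
  have inj: "inj \<sigma>\<^sub>1" "inj \<sigma>\<^sub>2" using assms(1,2) bij_is_inj permutation_bijective by blast+
  show "\<sigma>\<^sub>1 z = \<sigma>\<^sub>2 z"
  proof (cases "z \<in> Z")
    case True
    obtain n where "orbit_segment \<sigma>\<^sub>1 Z (\<sigma>\<^sub>1 z) z n"
      using assms(4) True at_most_one_per_orbit_iff_segments[OF assms(1)] by blast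
    moreover obtain m where "orbit_segment \<sigma>\<^sub>2 Z (\<sigma>\<^sub>2 z) z m"
      using assms(5) True at_most_one_per_orbit_iff_segments[OF assms(2)] by blast
    moreover have "\<sigma>\<^sub>1 z \<notin> \<sigma>\<^sub>1 ` (- Z)" "\<sigma>\<^sub>2 z \<notin> \<sigma>\<^sub>1 ` (- Z)"
      using True inj assms(3) by (auto simp: inj_eq) (metis inj(2) injD)
    ultimately show ?thesis
      using orbit_segment_start_unique[OF inj(1)] orbit_segment_cong[of Z \<sigma>\<^sub>1 \<sigma>\<^sub>2] assms(3)
      by metis
  qed (use assms(3) in simp)
qed

lemma exists_perm_at_most_one_per_orbit:
  fixes \<sigma>\<^sub>0 :: "'a::finite \<Rightarrow> 'a"
  assumes "\<sigma>\<^sub>0 permutes UNIV"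
  obtains \<sigma> where "\<sigma> permutes UNIV" "\<And>x. x \<notin> Z \<Longrightarrow> \<sigma> x = \<sigma>\<^sub>0 x" "at_most_one_per_orbit \<sigma> Z"
proof -
  have perm0: "permutation \<sigma>\<^sub>0" using assms by (simp add: permutes_imp_permutation)
  have inj0: "inj \<sigma>\<^sub>0" using assms permutes_inj by blast
  obtain start where start: "\<And>z. z \<in> Z \<Longrightarrow> \<exists>n. orbit_segment \<sigma>\<^sub>0 Z (start z) z n"
    "\<And>z. z \<in> Z \<Longrightarrow> start z \<notin> \<sigma>\<^sub>0 ` (- Z)"
  proof -
    have "\<forall>z\<in>Z. \<exists>s. (\<exists>n. orbit_segment \<sigma>\<^sub>0 Z s z n) \<and> s \<notin> \<sigma>\<^sub>0 ` (- Z)"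
      by (meson orbit_segment_start_exists[OF perm0])
    then show thesis using that by metis
  qed
  define \<sigma> where "\<sigma> x = (if x \<in> Z then start x else \<sigma>\<^sub>0 x)" for x
  have "inj \<sigma>"
  proof (rule injI)
    fix x y assume eq: "\<sigma> x = \<sigma> y"
    show "x = y"
    proof (cases "x \<in> Z"; cases "y \<in> Z")
      assume "x \<in> Z" "y \<in> Z"
      moreover obtain n m where "orbit_segment \<sigma>\<^sub>0 Z (start x) x n" "orbit_segment \<sigma>\<^sub>0 Z (start y) y m"
        using start(1) calculation by blast
      ultimately show ?thesis
        using eq orbit_segment_end_unique[of \<sigma>\<^sub>0 Z "start x" x n y m] by (simp add: \<sigma>_def)
    next
      assume "x \<in> Z" "y \<notin> Z"
      then show ?thesis using eq start(2)[of x] by (force simp: \<sigma>_def)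
    next
      assume "x \<notin> Z" "y \<in> Z"
      then show ?thesis using eq start(2)[of y] by (force simp: \<sigma>_def)
    next
      assume "x \<notin> Z" "y \<notin> Z"
      then show ?thesis using eq inj0 by (simp add: \<sigma>_def inj_eq)
    qed
  qed
  then have perm: "\<sigma> permutes UNIV"
    using finite_UNIV_inj_surj[of \<sigma>] by (auto intro!: bij_imp_permutes simp: bij_def)
  have "orbit_segment \<sigma> Z (\<sigma> z) z n" if "z \<in> Z" "orbit_segment \<sigma>\<^sub>0 Z (start z) z n" for z n
    using that orbit_segment_cong[of Z \<sigma> \<sigma>\<^sub>0] by (simp add: \<sigma>_def)
  then have "at_most_one_per_orbit \<sigma> Z"
    using start(1) perm by (simp add: at_most_one_per_orbit_iff_segments permutes_imp_permutation) blast
  with perm that show thesis by (simp add: \<sigma>_def)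
qed

lemma at_most_one_per_orbit_iff_card:
  assumes "permutation \<sigma>"
  shows "at_most_one_per_orbit \<sigma> Z \<longleftrightarrow> (\<forall>j. card {i \<in> cycle_dom \<sigma> j. i \<in> Z} \<le> 1)"
proof -
  have dom: "cycle_dom \<sigma> j = orbit \<sigma> j" for j
    by (simp add: cycle_dom_def orbit_altdef_permutation[OF assms])
  have same_orbit: "orbit \<sigma> x = orbit \<sigma> j" if "x \<in> orbit \<sigma> j" for x j
    using cyclic_on_orbit'[OF assms] orbit_cyclic_eq3 that by metis
  have fin: "finite {i \<in> orbit \<sigma> j. i \<in> Z}" for j
    using finite_orbit[OF permutation_self_in_orbit[OF assms]] by simp
  have "(\<forall>j. card {i \<in> orbit \<sigma> j. i \<in> Z} \<le> 1) \<longleftrightarrow>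
      (\<forall>j. \<forall>x \<in> {i \<in> orbit \<sigma> j. i \<in> Z}. \<forall>y \<in> {i \<in> orbit \<sigma> j. i \<in> Z}. x = y)"
    unfolding One_nat_def card_le_Suc0_iff_eq[OF fin] ..
  also have "\<dots> \<longleftrightarrow> at_most_one_per_orbit \<sigma> Z"
    unfolding at_most_one_per_orbit_def
    using same_orbit permutation_self_in_orbit[OF assms] by blast
  finally show ?thesis by (simp add: dom)
qed

section \<open>Matrices vanishing off the graph of a permutation\<close>

definition zero_cols :: "'a::zero^'n^'m \<Rightarrow> 'n set" where
  "zero_cols L = {j. \<forall>i. L $ i $ j = 0}"

lemma rank_eq_card_nonzero_cols:
  fixes L :: "'a::field^'n^'m"
  assumes row: "\<And>i j k. L $ i $ j \<noteq> 0 \<Longrightarrow> L $ i $ k \<noteq> 0 \<Longrightarrow> j = k"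
  shows "rank L = card (- zero_cols L)"
proof -
  define B where "B = (\<lambda>j. axis j 1 :: 'a^'n) ` (- zero_cols L)"
  have row_expansion: "row i L = (\<Sum>j \<in> - zero_cols L. L $ i $ j *s axis j 1)" for i
  proof -
    have "(\<Sum>j \<in> - zero_cols L. L $ i $ j *s axis j 1) $ k = L $ i $ k" for k
    proof -
      have "(\<Sum>j \<in> - zero_cols L. L $ i $ j *s axis j (1::'a)) $ k
          = (\<Sum>j \<in> - zero_cols L. if j = k then L $ i $ k else 0)"
        unfolding sum_component by (intro sum.cong) (auto simp: axis_def)
      also have "\<dots> = L $ i $ k" by (auto simp: zero_cols_def)
      finally show ?thesis .
    qed
    then show ?thesis by (simp add: vec_eq_iff row_def)
  qed
  have "rows L \<subseteq> vec.span B"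
  proof
    fix v assume "v \<in> rows L"
    then obtain i where "v = row i L" by (auto simp: rows_def)
    also have "\<dots> = (\<Sum>j \<in> - zero_cols L. L $ i $ j *s axis j 1)" by (rule row_expansion)
    also have "\<dots> \<in> vec.span B"
      by (intro vec.span_sum vec.span_scale vec.span_base) (auto simp: B_def)
    finally show "v \<in> vec.span B" .
  qed
  moreover have "B \<subseteq> vec.span (rows L)"
  proof
    fix v assume "v \<in> B"
    then obtain i j where v: "v = axis j 1" and nz: "L $ i $ j \<noteq> 0"
      by (auto simp: B_def zero_cols_def)
    have "v $ k = ((1 / L $ i $ j) *s row i L) $ k" for k
      using row[of i j k] nz by (cases "k = j") (auto simp: v row_def axis_def)
    then have "v = (1 / L $ i $ j) *s row i L" by (simp add: vec_eq_iff)
    also have "\<dots> \<in> vec.span (rows L)"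
      by (intro vec.span_scale vec.span_base) (auto simp: rows_def)
    finally show "v \<in> vec.span (rows L)" .
  qed
  ultimately have "vec.span (rows L) = vec.span B" using vec.span_eq by blast
  moreover have "vec.independent B"
    by (rule vec.independent_mono[OF independent_cart_basis]) (auto simp: B_def cart_basis_def)
  ultimately have "rank L = card B"
    by (metis row_rank_def_gen vec.dim_eq_card_independent vec.dim_span)
  also have "\<dots> = card (- zero_cols L)"
    unfolding B_def by (rule card_image) (auto simp: inj_on_def axis_eq_axis)
  finally show ?thesis .
qed

definition vanishes_off_graph :: "'a::zero^'n^'n \<Rightarrow> ('n \<Rightarrow> 'n) \<Rightarrow> bool" where
  "vanishes_off_graph L \<sigma> \<longleftrightarrow> (\<forall>i j. i \<noteq> \<sigma> j \<longrightarrow> L $ i $ j = 0)"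

definition column_sum_diag :: "'a::comm_monoid_add^'n^'n \<Rightarrow> 'a^'n^'n" where
  "column_sum_diag L = (\<chi> i j. if i = j then \<Sum>k\<in>UNIV. L $ k $ j else 0)"

lemma column_sum_on_graph:
  assumes "vanishes_off_graph L \<sigma>"
  shows "(\<Sum>k\<in>UNIV. L $ k $ j) = L $ \<sigma> j $ j"
proof -
  have "(\<Sum>k\<in>UNIV. L $ k $ j) = (\<Sum>k\<in>UNIV. if k = \<sigma> j then L $ k $ j else 0)"
    using assms by (intro sum.cong) (auto simp: vanishes_off_graph_def)
  then show ?thesis by simp
qed

lemma vanishes_off_graph_iff_agree_off_zero_cols:
  assumes "vanishes_off_graph L \<sigma>\<^sub>0"
  shows "vanishes_off_graph L \<sigma> \<longleftrightarrow> (\<forall>j. j \<notin> zero_cols L \<longrightarrow> \<sigma> j = \<sigma>\<^sub>0 j)"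
proof
  assume graph: "vanishes_off_graph L \<sigma>"
  show "\<forall>j. j \<notin> zero_cols L \<longrightarrow> \<sigma> j = \<sigma>\<^sub>0 j"
  proof (intro allI impI)
    fix j assume "j \<notin> zero_cols L"
    then obtain i where "L $ i $ j \<noteq> 0" by (auto simp: zero_cols_def)
    with graph assms show "\<sigma> j = \<sigma>\<^sub>0 j" unfolding vanishes_off_graph_def by metis
  qed
next
  assume agree: "\<forall>j. j \<notin> zero_cols L \<longrightarrow> \<sigma> j = \<sigma>\<^sub>0 j"
  show "vanishes_off_graph L \<sigma>"
    unfolding vanishes_off_graph_def
  proof (intro allI impI)
    fix i j assume "i \<noteq> \<sigma> j"
    show "L $ i $ j = 0"
    proof (cases "j \<in> zero_cols L")
      case False
      then show ?thesis using agree assms \<open>i \<noteq> \<sigma> j\<close> by (simp add: vanishes_off_graph_def)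
    qed (simp add: zero_cols_def)
  qed
qed

lemma column_sum_diag_eq_0_iff:
  assumes "vanishes_off_graph L \<sigma>"
  shows "column_sum_diag L $ j $ j = 0 \<longleftrightarrow> j \<in> zero_cols L"
proof -
  have "column_sum_diag L $ j $ j = L $ \<sigma> j $ j"
    by (simp add: column_sum_diag_def column_sum_on_graph[OF assms])
  then show ?thesis
    using assms unfolding zero_cols_def vanishes_off_graph_def by force
qed

lemma relaxed_gen_perm_obtains_graph_perm:
  assumes "relaxed_gen_perm L"
  obtains \<sigma> where "\<sigma> permutes UNIV" "vanishes_off_graph L \<sigma>"
proof -
  have row: "j = k" if "L $ i $ j \<noteq> 0" "L $ i $ k \<noteq> 0" for i j k
    using assms that unfolding relaxed_gen_perm_def by blast
  have col: "i = k" if "L $ i $ j \<noteq> 0" "L $ k $ j \<noteq> 0" for i j k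
    using assms that unfolding relaxed_gen_perm_def by blast
  define r where "r j = (SOME i. L $ i $ j \<noteq> 0)" for j
  have r: "L $ r j $ j \<noteq> 0" if nonzero: "j \<notin> zero_cols L" for j
  proof -
    obtain i where "L $ i $ j \<noteq> 0" using nonzero by (auto simp: zero_cols_def)
    then show ?thesis unfolding r_def by (rule someI)
  qed
  have "inj_on r (- zero_cols L)"
  proof (rule inj_onI)
    fix j k assume "j \<in> - zero_cols L" "k \<in> - zero_cols L" "r j = r k"
    then have "L $ r j $ j \<noteq> 0" "L $ r j $ k \<noteq> 0" using r[of j] r[of k] by simp_all
    then show "j = k" by (rule row)
  qed
  then obtain \<sigma> where \<sigma>: "\<sigma> permutes UNIV" "\<And>j. j \<in> - zero_cols L \<Longrightarrow> \<sigma> j = r j"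
    using inj_on_extends_to_permutation by blast
  have "vanishes_off_graph L \<sigma>"
    unfolding vanishes_off_graph_def
  proof (intro allI impI)
    fix i j assume "i \<noteq> \<sigma> j"
    show "L $ i $ j = 0"
    proof (cases "j \<in> zero_cols L")
      case False
      show ?thesis
      proof (rule ccontr)
        assume "L $ i $ j \<noteq> 0"
        then have "i = r j" using r[OF False] by (rule col)
        then show False using \<sigma>(2) False \<open>i \<noteq> \<sigma> j\<close> by simp
      qed
    qed (simp add: zero_cols_def)
  qed
  with \<sigma>(1) that show thesis by blast
qed

lemma perm_mat_of_mult_diag:
  assumes "is_diag_matrix D"
  shows "(perm_mat_of \<sigma> ** D) $ i $ j = (if i = \<sigma> j then D $ j $ j else 0)"
proof -
  have "(if i = \<sigma> k then 1 else 0) * D $ k $ j = (if k = j \<and> i = \<sigma> j then D $ j $ j else 0)" for k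
    using assms unfolding is_diag_matrix_def by auto
  then show ?thesis unfolding matrix_matrix_mult_def perm_mat_of_def by simp
qed

lemma perm_mat_of_eq_iff: "perm_mat_of \<sigma> = perm_mat_of \<tau> \<longleftrightarrow> \<sigma> = \<tau>"
proof
  assume eq: "perm_mat_of \<sigma> = perm_mat_of \<tau>"
  show "\<sigma> = \<tau>"
  proof
    fix j
    have "perm_mat_of \<tau> $ \<sigma> j $ j = 1" unfolding eq [symmetric] by (simp add: perm_mat_of_def)
    then show "\<sigma> j = \<tau> j" by (simp add: perm_mat_of_def split: if_splits)
  qed
qed simp

lemma is_AD_decomp_iff:
  "is_AD_decomp L A D \<longleftrightarrow>
     (\<exists>\<sigma>. \<sigma> permutes UNIV \<and> A = perm_mat_of \<sigma> \<and> vanishes_off_graph L \<sigma>) \<and> D = column_sum_diag L"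
proof
  assume "is_AD_decomp L A D"
  then obtain \<sigma> where \<sigma>: "\<sigma> permutes UNIV" "A = perm_mat_of \<sigma>"
    and D: "is_diag_matrix D" and L: "L = A ** D"
    by (auto simp: is_AD_decomp_def is_perm_matrix_def)
  have L_entry: "L $ i $ j = (if i = \<sigma> j then D $ j $ j else 0)" for i j
    using perm_mat_of_mult_diag[OF D] L \<sigma>(2) by simp
  then have graph: "vanishes_off_graph L \<sigma>" by (simp add: vanishes_off_graph_def)
  have "D = column_sum_diag L"
    using D by (simp add: vec_eq_iff column_sum_diag_def column_sum_on_graph[OF graph]
        L_entry is_diag_matrix_def)
  with \<sigma> graph show "(\<exists>\<sigma>. \<sigma> permutes UNIV \<and> A = perm_mat_of \<sigma> \<and> vanishes_off_graph L \<sigma>) \<and>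
      D = column_sum_diag L" by blast
next
  assume "(\<exists>\<sigma>. \<sigma> permutes UNIV \<and> A = perm_mat_of \<sigma> \<and> vanishes_off_graph L \<sigma>) \<and>
      D = column_sum_diag L"
  then obtain \<sigma> where \<sigma>: "\<sigma> permutes UNIV" "A = perm_mat_of \<sigma>" and graph: "vanishes_off_graph L \<sigma>"
    and D: "D = column_sum_diag L" by blast
  have diag: "is_diag_matrix D" by (simp add: D is_diag_matrix_def column_sum_diag_def)
  have "L $ i $ j = (A ** D) $ i $ j" for i j
    using graph unfolding \<sigma>(2) perm_mat_of_mult_diag[OF diag]
    by (auto simp: D column_sum_diag_def column_sum_on_graph vanishes_off_graph_def)
  then have "L = A ** D" by (simp add: vec_eq_iff)
  with \<sigma> diag show "is_AD_decomp L A D"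
    by (auto simp: is_AD_decomp_def is_perm_matrix_def)
qed

lemma AD_decomp_perm_mats:
  "{A. \<exists>D. is_AD_decomp L A D} = perm_mat_of ` {\<sigma>. \<sigma> permutes UNIV \<and> vanishes_off_graph L \<sigma>}"
  by (auto simp: is_AD_decomp_iff)

lemma card_AD_decomp_perm_mats:
  fixes L :: "complex^'n^'n::finite"
  assumes "relaxed_gen_perm L"
  shows "card {A. \<exists>D. is_AD_decomp L A D} = fact (CARD('n) - rank L)"
proof -
  obtain \<sigma>\<^sub>0 where \<sigma>\<^sub>0: "\<sigma>\<^sub>0 permutes UNIV" "vanishes_off_graph L \<sigma>\<^sub>0"
    using relaxed_gen_perm_obtains_graph_perm[OF assms] by blast
  have "{\<sigma>. \<sigma> permutes UNIV \<and> vanishes_off_graph L \<sigma>} =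
      {\<sigma>. \<sigma> permutes UNIV \<and> (\<forall>j. j \<notin> zero_cols L \<longrightarrow> \<sigma> j = \<sigma>\<^sub>0 j)}"
    using vanishes_off_graph_iff_agree_off_zero_cols[OF \<sigma>\<^sub>0(2)] by blast
  then have "card {\<sigma>. \<sigma> permutes UNIV \<and> vanishes_off_graph L \<sigma>} = fact (card (zero_cols L))"
    using card_perms_agreeing_outside[OF \<sigma>\<^sub>0(1)] by simp
  moreover have "rank L = card (- zero_cols L)"
    using assms unfolding relaxed_gen_perm_def by (intro rank_eq_card_nonzero_cols) blast
  then have "CARD('n) - rank L = card (zero_cols L)"
    using card_mono[OF finite subset_UNIV, of "zero_cols L"] by (simp add: card_Compl_finite)
  moreover have "inj_on perm_mat_of X" for X :: "('n \<Rightarrow> 'n) set"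
    by (simp add: inj_on_def perm_mat_of_eq_iff)
  ultimately show ?thesis by (simp add: AD_decomp_perm_mats card_image)
qed

lemma AD_decomp_unique_iff:
  fixes L :: "complex^'n^'n::finite"
  assumes "relaxed_gen_perm L"
  shows "(\<forall>A\<^sub>1 D\<^sub>1 A\<^sub>2 D\<^sub>2. is_AD_decomp L A\<^sub>1 D\<^sub>1 \<and> is_AD_decomp L A\<^sub>2 D\<^sub>2 \<longrightarrow> A\<^sub>1 = A\<^sub>2 \<and> D\<^sub>1 = D\<^sub>2)
    \<longleftrightarrow> CARD('n) - rank L \<le> 1"
proof -
  let ?As = "{A. \<exists>D. is_AD_decomp L A D}"
  have "finite ?As" by (simp add: AD_decomp_perm_mats)
  have "(\<forall>A\<^sub>1 D\<^sub>1 A\<^sub>2 D\<^sub>2. is_AD_decomp L A\<^sub>1 D\<^sub>1 \<and> is_AD_decomp L A\<^sub>2 D\<^sub>2 \<longrightarrow> A\<^sub>1 = A\<^sub>2 \<and> D\<^sub>1 = D\<^sub>2)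
      \<longleftrightarrow> (\<forall>A\<^sub>1 \<in> ?As. \<forall>A\<^sub>2 \<in> ?As. A\<^sub>1 = A\<^sub>2)"
    by (auto simp: is_AD_decomp_iff)
  also have "\<dots> \<longleftrightarrow> card ?As \<le> 1"
    unfolding One_nat_def card_le_Suc0_iff_eq[OF \<open>finite ?As\<close>] ..
  also have "\<dots> \<longleftrightarrow> CARD('n) - rank L \<le> 1"
    unfolding card_AD_decomp_perm_mats[OF assms]
    by (metis fact_1 fact_ge_self fact_mono le_Suc_eq le_zero_eq order_trans)
  finally show ?thesis .
qed

lemma cycle_rule_perm_mat_iff:
  assumes "\<sigma> permutes UNIV" "vanishes_off_graph L \<sigma>"
  shows "cycle_rule (perm_mat_of \<sigma>) (column_sum_diag L) \<longleftrightarrow> at_most_one_per_orbit \<sigma> (zero_cols L)"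
proof -
  have "cycle_rule (perm_mat_of \<sigma>) (column_sum_diag L) \<longleftrightarrow>
      (\<forall>j. card {i \<in> cycle_dom \<sigma> j. i \<in> zero_cols L} \<le> 1)"
    using assms(1)
    by (simp add: cycle_rule_def perm_mat_of_eq_iff column_sum_diag_eq_0_iff[OF assms(2)])
  also have "\<dots> \<longleftrightarrow> at_most_one_per_orbit \<sigma> (zero_cols L)"
    using assms(1) by (simp add: at_most_one_per_orbit_iff_card permutes_imp_permutation)
  finally show ?thesis .
qed

lemma cycle_rule_AD_decomp_unique:
  assumes "is_AD_decomp L A\<^sub>1 D\<^sub>1" "cycle_rule A\<^sub>1 D\<^sub>1" "is_AD_decomp L A\<^sub>2 D\<^sub>2" "cycle_rule A\<^sub>2 D\<^sub>2"
  shows "A\<^sub>1 = A\<^sub>2"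
proof -
  obtain \<sigma>\<^sub>1 where \<sigma>\<^sub>1: "\<sigma>\<^sub>1 permutes UNIV" "A\<^sub>1 = perm_mat_of \<sigma>\<^sub>1" "vanishes_off_graph L \<sigma>\<^sub>1"
    and D\<^sub>1: "D\<^sub>1 = column_sum_diag L"
    using assms(1) is_AD_decomp_iff by blast
  obtain \<sigma>\<^sub>2 where \<sigma>\<^sub>2: "\<sigma>\<^sub>2 permutes UNIV" "A\<^sub>2 = perm_mat_of \<sigma>\<^sub>2" "vanishes_off_graph L \<sigma>\<^sub>2"
    and D\<^sub>2: "D\<^sub>2 = column_sum_diag L"
    using assms(3) is_AD_decomp_iff by blast
  have "\<sigma>\<^sub>2 = \<sigma>\<^sub>1"
  proof (rule at_most_one_per_orbit_unique)
    show "permutation \<sigma>\<^sub>2" "permutation \<sigma>\<^sub>1"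
      using \<sigma>\<^sub>1(1) \<sigma>\<^sub>2(1) by (simp_all add: permutes_imp_permutation)
    show "\<And>x. x \<notin> zero_cols L \<Longrightarrow> \<sigma>\<^sub>2 x = \<sigma>\<^sub>1 x"
      using vanishes_off_graph_iff_agree_off_zero_cols[OF \<sigma>\<^sub>1(3)] \<sigma>\<^sub>2(3) by blast
    show "at_most_one_per_orbit \<sigma>\<^sub>2 (zero_cols L)" "at_most_one_per_orbit \<sigma>\<^sub>1 (zero_cols L)"
      using assms(2,4) \<sigma>\<^sub>1 \<sigma>\<^sub>2 D\<^sub>1 D\<^sub>2 cycle_rule_perm_mat_iff by blast+
  qed
  then show ?thesis using \<sigma>\<^sub>1(2) \<sigma>\<^sub>2(2) by simp
qed

lemma exists_cycle_rule_AD_decomp: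
  assumes "relaxed_gen_perm L"
  shows "\<exists>A D. is_AD_decomp L A D \<and> cycle_rule A D"
proof -
  obtain \<sigma>\<^sub>0 where \<sigma>\<^sub>0: "\<sigma>\<^sub>0 permutes UNIV" "vanishes_off_graph L \<sigma>\<^sub>0"
    using relaxed_gen_perm_obtains_graph_perm[OF assms] by blast
  obtain \<sigma> where \<sigma>: "\<sigma> permutes UNIV" "\<And>x. x \<notin> zero_cols L \<Longrightarrow> \<sigma> x = \<sigma>\<^sub>0 x"
    "at_most_one_per_orbit \<sigma> (zero_cols L)"
    using exists_perm_at_most_one_per_orbit[OF \<sigma>\<^sub>0(1)] by blast
  have "vanishes_off_graph L \<sigma>"
    using vanishes_off_graph_iff_agree_off_zero_cols[OF \<sigma>\<^sub>0(2)] \<sigma>(2) by blast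
  then show ?thesis using \<sigma>(1,3) is_AD_decomp_iff cycle_rule_perm_mat_iff by blast
qed

theorem mainTheorem1:
  fixes L :: "complex^'n^'n::finite"
  assumes "relaxed_gen_perm L"
  defines "n_z \<equiv> CARD('n) - rank L"
  shows "(\<forall>A1 D1 A2 D2. is_AD_decomp L A1 D1 \<and> is_AD_decomp L A2 D2 \<longrightarrow> D1 = D2)
    \<and> ((\<forall>A1 D1 A2 D2. is_AD_decomp L A1 D1 \<and> is_AD_decomp L A2 D2 \<longrightarrow> A1 = A2 \<and> D1 = D2)
         \<longleftrightarrow> n_z \<le> 1)
    \<and> (n_z \<ge> 2 \<longrightarrow> card {A. \<exists>D. is_AD_decomp L A D} = fact n_z)
    \<and> (\<forall>A1 D1 A2 D2. is_AD_decomp L A1 D1 \<and> cycle_rule A1 D1 \<and>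
          is_AD_decomp L A2 D2 \<and> cycle_rule A2 D2 \<longrightarrow> A1 = A2)
    \<and> (\<exists>A D. is_AD_decomp L A D \<and> cycle_rule A D)"
proof -
  have "is_AD_decomp L A\<^sub>1 D\<^sub>1 \<Longrightarrow> is_AD_decomp L A\<^sub>2 D\<^sub>2 \<Longrightarrow> D\<^sub>1 = D\<^sub>2" for A\<^sub>1 D\<^sub>1 A\<^sub>2 D\<^sub>2
    by (simp add: is_AD_decomp_iff)
  then show ?thesis
    using AD_decomp_unique_iff[OF assms(1)] card_AD_decomp_perm_mats[OF assms(1)]
      cycle_rule_AD_decomp_unique exists_cycle_rule_AD_decomp[OF assms(1)]
    unfolding n_z_def by blast
qed

end
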